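(* Let $\mathcal{X}'\subseteq\mathcal{X}$ be a set of pairwise backward kinematically inseparable observations. Then there exists $u\in\Delta(\mathcal{X})$ with $\mathrm{supp}(u)=\mathcal{X}$ such that for all $x',x''\in\mathcal{X}'$, $$\forall x\in\mathcal{X},a\in\mathcal{A}:\quad\frac{T(x'\mid x,a)}{u(x')}=\frac{T(x''\mid x,a)}{u(x'')}.$$ Conversely, if this identity holds for some $u\in\Delta(\mathcal{X})$ with full support and all $x',x''\in\mathcal{X}'\subseteq\mathcal{X}$, then $\mathcal{X}'$ is a backward kinematically inseparable set.
   Context: Block MDP: horizon $H$; finite latent states $\mathcal{S}=\sqcup_h\mathcal{S}_h$; countable observations $\mathcal{X}=\sqcup_h\mathcal{X}_h$; finite actions $\mathcal{A}$; transitions $T(\cdot\mid s,a)\in\Delta(\mathcal{S}_{h+1})$ for $s\in\mathcal{S}_h$; emissions $q(\cdot\mid s)\in\Delta(\mathcal{X}_h)$ with pairwise disjoint supports, giving a decoder $g^\star$. Observation transitions: $T(x'\mid x,a)=q(x'\mid g^\star(x'))T(g^\star(x')\mid g^\star(x),a)$. For $u\in\Delta(\mathcal{X}\times\mathcal{A})$ with full support, $\mathbb{P}_u(x,a\mid x')=\frac{T(x'\mid x,a)u(x,a)}{\sum_{\tilde x,\tilde a}T(x'\mid\tilde x,\tilde a)u(\tilde x,\tilde a)}$; $x_1',x_2'$ are backward kinematically inseparable if $\mathbb{P}_u(\cdot\mid x_1')=\mathbb{P}_u(\cdot\mid x_2')$ for every full-support $u$ (an equivalence relation); a backward KI set is a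 set of pairwise backward KI observations. *)

theory Defs
  imports "HOL-Analysis.Analysis"
begin

text \<open>Block MDP. Latent states: finite type 's with level function levS (levels 1..H).
  Observations: countable type 'x. Actions: finite type 'a.
  Tl s a s' = T(s' | s, a);  q s x = q(x | s).\<close>

definition block_mdp ::
  "nat \<Rightarrow> ('s::finite \<Rightarrow> nat) \<Rightarrow> ('s \<Rightarrow> 'a::finite \<Rightarrow> 's \<Rightarrow> real)
     \<Rightarrow> ('s \<Rightarrow> 'x::countable \<Rightarrow> real) \<Rightarrow> bool" where
  "block_mdp H levS Tl q \<longleftrightarrow>
     (\<forall>s. 1 \<le> levS s \<and> levS s \<le> H) \<and>
     (\<forall>s a s'. 0 \<le> Tl s a s') \<and>
     (\<forall>s a s'. 0 < Tl s a s' \<longrightarrow> levS s' = Suc (levS s)) \<and>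
     (\<forall>s a. levS s < H \<longrightarrow> (\<Sum>s'\<in>UNIV. Tl s a s') = 1) \<and>
     (\<forall>s x. 0 \<le> q s x) \<and>
     (\<forall>s. (q s has_sum 1) UNIV) \<and>
     (\<forall>s1 s2 x. 0 < q s1 x \<and> 0 < q s2 x \<longrightarrow> s1 = s2) \<and>
     (\<forall>x. \<exists>s. 0 < q s x)"

definition decoder :: "('s \<Rightarrow> 'x \<Rightarrow> real) \<Rightarrow> 'x \<Rightarrow> 's" where
  "decoder q x = (THE s. 0 < q s x)"

text \<open>Observation transitions: obsT Tl q x' x a = T(x' | x, a).\<close>
definition obsT :: "('s \<Rightarrow> 'a \<Rightarrow> 's \<Rightarrow> real) \<Rightarrow> ('s \<Rightarrow> 'x \<Rightarrow> real) \<Rightarrow> 'x \<Rightarrow> 'x \<Rightarrow> 'a \<Rightarrow> real" where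
  "obsT Tl q x' x a = q (decoder q x') x' * Tl (decoder q x) a (decoder q x')"

definition full_support_dist :: "('b \<Rightarrow> real) \<Rightarrow> bool" where
  "full_support_dist u \<longleftrightarrow> (\<forall>z. 0 < u z) \<and> (u has_sum 1) UNIV"

definition Pback ::
  "('s \<Rightarrow> 'a \<Rightarrow> 's \<Rightarrow> real) \<Rightarrow> ('s \<Rightarrow> 'x \<Rightarrow> real) \<Rightarrow> ('x \<times> 'a \<Rightarrow> real) \<Rightarrow> 'x \<Rightarrow> 'x \<times> 'a \<Rightarrow> real" where
  "Pback Tl q u x' xa =
     obsT Tl q x' (fst xa) (snd xa) * u xa /
     (\<Sum>\<^sub>\<infinity>ya\<in>UNIV. obsT Tl q x' (fst ya) (snd ya) * u ya)"

definition backward_KI ::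
  "('s \<Rightarrow> 'a \<Rightarrow> 's \<Rightarrow> real) \<Rightarrow> ('s \<Rightarrow> 'x \<Rightarrow> real) \<Rightarrow> 'x \<Rightarrow> 'x \<Rightarrow> bool" where
  "backward_KI Tl q x1 x2 \<longleftrightarrow>
     (\<forall>u :: 'x \<times> 'a \<Rightarrow> real. full_support_dist u \<longrightarrow> Pback Tl q u x1 = Pback Tl q u x2)"

definition backward_KI_set ::
  "('s \<Rightarrow> 'a \<Rightarrow> 's \<Rightarrow> real) \<Rightarrow> ('s \<Rightarrow> 'x \<Rightarrow> real) \<Rightarrow> 'x set \<Rightarrow> bool" where
  "backward_KI_set Tl q X' \<longleftrightarrow> (\<forall>x1\<in>X'. \<forall>x2\<in>X'. backward_KI Tl q x1 x2)"

end

theory Submission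
  imports Defs
begin

text \<open>Two observations x1, x2 are backward kinematically inseparable iff the rows
  T(x1 | \<cdot>) and T(x2 | \<cdot>) of the observation kernel are positively proportional: the
  posterior of a prior u sees a row only up to its normaliser (the evidence), and for a single
  full-support u the ratio of the two evidences already is the proportionality constant.
  Given a set X' of pairwise proportional rows, pick an entry z0 at which they do not vanish
  and take u(x') proportional to T(x' | z0) on X'; then T(x' | z) / u(x') is a constant
  multiple of T(x' | z) / T(x' | z0), which does not depend on x' \<in> X'.\<close>

definition proportional :: "('z \<Rightarrow> real) \<Rightarrow> ('z \<Rightarrow> real) \<Rightarrow> bool" where
  "proportional f g \<longleftrightarrow> (\<exists>c>0. \<forall>z. f z = c * g z)"

definition evidence :: "('x \<Rightarrow> 'z \<Rightarrow> real) \<Rightarrow> ('z \<Rightarrow> real) \<Rightarrow> 'x \<Rightarrow> real" where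
  "evidence K u x = (\<Sum>\<^sub>\<infinity>z. K x z * u z)"

definition posterior :: "('x \<Rightarrow> 'z \<Rightarrow> real) \<Rightarrow> ('z \<Rightarrow> real) \<Rightarrow> 'x \<Rightarrow> 'z \<Rightarrow> real" where
  "posterior K u x z = K x z * u z / evidence K u x"

lemma Pback_eq_posterior:
  "Pback Tl q u x' = posterior (\<lambda>x' z. obsT Tl q x' (fst z) (snd z)) u x'"
  by (simp add: Pback_def posterior_def evidence_def fun_eq_iff)

lemma infsum_pos:
  fixes w :: "'z \<Rightarrow> real"
  assumes "w summable_on UNIV" "\<And>z. 0 \<le> w z" "w z0 \<noteq> 0"
  shows "0 < infsum w UNIV"
  using nonneg_infsum_le_0D[of w UNIV z0] assms by force

lemma full_support_dist_normalize:
  fixes w :: "'z \<Rightarrow> real"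
  assumes pos: "\<And>z. 0 < w z" and summable: "w summable_on UNIV"
  shows "full_support_dist (\<lambda>z. w z / infsum w UNIV)"
proof -
  have S_pos: "0 < infsum w UNIV"
    using infsum_pos[OF summable] pos by (metis less_imp_le less_irrefl)
  have "((\<lambda>z. w z / infsum w UNIV) has_sum infsum w UNIV / infsum w UNIV) UNIV"
    by (rule has_sum_divide_const) (use summable in simp)
  with S_pos pos show ?thesis
    by (simp add: full_support_dist_def)
qed

lemma exists_full_support_dist: "\<exists>u :: 'z::countable \<Rightarrow> real. full_support_dist u"
proof -
  have "(\<lambda>n::nat. (1/2::real) ^ n) summable_on UNIV"
    by (subst summable_on_UNIV_nonneg_real_iff) (auto intro: summable_geometric)
  then have "(\<lambda>n::nat. (1/2::real) ^ n) summable_on range to_nat"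
    by (rule summable_on_subset) auto
  then have "(\<lambda>z::'z. (1/2::real) ^ to_nat z) summable_on UNIV"
    by (subst (asm) summable_on_reindex) (auto simp: o_def)
  then show ?thesis
    using full_support_dist_normalize[of "\<lambda>z::'z. (1/2::real) ^ to_nat z"] by auto
qed

lemma full_support_dist_pos: "full_support_dist u \<Longrightarrow> 0 < u z"
  by (simp add: full_support_dist_def)

lemma full_support_dist_summable: "full_support_dist u \<Longrightarrow> u summable_on UNIV"
  by (auto simp: full_support_dist_def summable_on_def)

lemma evidence_nonneg:
  "(\<And>z. 0 \<le> K x z) \<Longrightarrow> full_support_dist u \<Longrightarrow> 0 \<le> evidence K u x"
  by (simp add: evidence_def infsum_nonneg full_support_dist_pos less_imp_le)

lemma evidence_eq_0_iff:
  assumes nonneg: "\<And>z. 0 \<le> K x z" and bounded: "\<And>z. K x z \<le> B"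
    and u: "full_support_dist u"
  shows "evidence K u x = 0 \<longleftrightarrow> (\<forall>z. K x z = 0)"
proof
  note u_pos = full_support_dist_pos[OF u]
  have summable: "(\<lambda>z. K x z * u z) summable_on UNIV"
  proof (rule summable_on_comparison_test)
    show "(\<lambda>z. B * u z) summable_on UNIV"
      using full_support_dist_summable[OF u] by (rule summable_on_cmult_right)
    show "K x z * u z \<le> B * u z" "0 \<le> K x z * u z" for z
      using nonneg[of z] bounded[of z] u_pos[of z] by (simp_all add: mult_right_mono)
  qed
  assume "evidence K u x = 0"
  show "\<forall>z. K x z = 0"
  proof (rule allI, rule ccontr)
    fix z assume "K x z \<noteq> 0"
    have "0 \<le> K x z' * u z'" for z'
      using nonneg[of z'] u_pos[of z'] by simp
    moreover have "K x z * u z \<noteq> 0"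
      using \<open>K x z \<noteq> 0\<close> u_pos[of z] by simp
    ultimately have "0 < (\<Sum>\<^sub>\<infinity>z. K x z * u z)"
      by (rule infsum_pos[OF summable])
    with \<open>evidence K u x = 0\<close> show False
      by (simp add: evidence_def)
  qed
qed (simp add: evidence_def)

lemma posterior_eq_if_proportional:
  assumes "proportional (K x1) (K x2)"
  shows "posterior K u x1 = posterior K u x2"
proof
  fix z
  from assms obtain c where "c > 0" and row: "\<And>z. K x1 z = c * K x2 z"
    by (auto simp: proportional_def)
  have "evidence K u x1 = c * evidence K u x2"
    by (simp add: evidence_def row mult.assoc infsum_cmult_right')
  with \<open>c > 0\<close> show "posterior K u x1 z = posterior K u x2 z"
    by (simp add: posterior_def row mult.assoc)
qed

lemma proportional_if_posterior_eq:
  fixes K :: "'x \<Rightarrow> 'z::countable \<Rightarrow> real"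
  assumes nonneg: "\<And>x z. 0 \<le> K x z" and bounded: "\<And>x z. K x z \<le> B"
    and posterior_eq: "\<And>u. full_support_dist u \<Longrightarrow> posterior K u x1 = posterior K u x2"
  shows "proportional (K x1) (K x2)"
proof -
  obtain u :: "'z \<Rightarrow> real" where u: "full_support_dist u"
    using exists_full_support_dist by blast
  let ?N = "evidence K u"
  have N_zero_iff: "?N x = 0 \<longleftrightarrow> (\<forall>z. K x z = 0)" for x
    using evidence_eq_0_iff[where x = x, OF nonneg bounded u] .
  have ratio: "K x1 z / ?N x1 = K x2 z / ?N x2" for z
  proof -
    have "K x1 z / ?N x1 * u z = K x2 z / ?N x2 * u z"
      using fun_cong[OF posterior_eq[OF u], of z] by (simp add: posterior_def)
    with full_support_dist_pos[OF u, of z] show ?thesis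
      by (metis less_irrefl mult_cancel_right)
  qed
  then have N_zero_cong: "?N x1 = 0 \<longleftrightarrow> ?N x2 = 0"
    using N_zero_iff by (metis divide_eq_0_iff)
  show ?thesis
    unfolding proportional_def
  proof (cases "?N x2 = 0")
    case True
    then show "\<exists>c>0. \<forall>z. K x1 z = c * K x2 z"
      using N_zero_iff N_zero_cong by (intro exI[of _ 1]) auto
  next
    case False
    have "0 \<le> ?N x1" "0 \<le> ?N x2"
      using evidence_nonneg[where x = x1, OF nonneg u] evidence_nonneg[where x = x2, OF nonneg u]
      by auto
    with False N_zero_cong have "0 < ?N x1" "0 < ?N x2"
      by auto
    then show "\<exists>c>0. \<forall>z. K x1 z = c * K x2 z"
      using ratio by (intro exI[of _ "?N x1 / ?N x2"]) (simp add: field_simps)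
  qed
qed

lemma proportional_if_equal_ratios:
  assumes u: "full_support_dist u"
    and equal: "\<forall>x1\<in>X. \<forall>x2\<in>X. \<forall>z. K x1 z / u x1 = K x2 z / u x2"
    and "x1 \<in> X" "x2 \<in> X"
  shows "proportional (K x1) (K x2)"
proof -
  have "K x1 z = u x1 / u x2 * K x2 z" for z
  proof -
    have "K x1 z = u x1 * (K x1 z / u x1)"
      using full_support_dist_pos[OF u, of x1] by simp
    also have "\<dots> = u x1 * (K x2 z / u x2)"
      using equal \<open>x1 \<in> X\<close> \<open>x2 \<in> X\<close> by metis
    also have "\<dots> = u x1 / u x2 * K x2 z"
      by simp
    finally show ?thesis .
  qed
  with full_support_dist_pos[OF u, of x1] full_support_dist_pos[OF u, of x2] show ?thesis
    unfolding proportional_def by (intro exI[of _ "u x1 / u x2"]) simp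
qed

lemma exists_dist_equal_ratios_if_proportional:
  fixes K :: "'x::countable \<Rightarrow> 'z \<Rightarrow> real"
  assumes nonneg: "\<And>x z. 0 \<le> K x z" and summable: "\<And>z. (\<lambda>x. K x z) summable_on UNIV"
    and pairwise: "\<forall>x1\<in>X. \<forall>x2\<in>X. proportional (K x1) (K x2)"
  shows "\<exists>u. full_support_dist u \<and> (\<forall>x1\<in>X. \<forall>x2\<in>X. \<forall>z. K x1 z / u x1 = K x2 z / u x2)"
proof (cases "\<forall>x\<in>X. \<forall>z. K x z = 0")
  case True
  then show ?thesis using exists_full_support_dist by auto
next
  case False
  then obtain x0 z0 where "x0 \<in> X" and "K x0 z0 \<noteq> 0" by blast
  have column_pos: "0 < K x z0" if "x \<in> X" for x
  proof -
    from pairwise \<open>x0 \<in> X\<close> \<open>x \<in> X\<close> obtain c where "K x0 z0 = c * K x z0"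
      unfolding proportional_def by blast
    with \<open>K x0 z0 \<noteq> 0\<close> nonneg[of x z0] show ?thesis by (auto simp: less_le)
  qed
  obtain v :: "'x \<Rightarrow> real" where v: "full_support_dist v"
    using exists_full_support_dist by blast
  define w where "w x = (if x \<in> X then K x z0 else v x)" for x
  have w_pos: "0 < w x" for x
    using column_pos full_support_dist_pos[OF v] by (simp add: w_def)
  have "w summable_on UNIV"
  proof (rule summable_on_comparison_test)
    show "(\<lambda>x. K x z0 + v x) summable_on UNIV"
      using summable full_support_dist_summable[OF v] by (rule summable_on_add)
    show "w x \<le> K x z0 + v x" "0 \<le> w x" for x
      using w_pos[of x] nonneg[of x z0] full_support_dist_pos[OF v, of x] by (simp_all add: w_def)
  qed
  define S where "S = infsum w UNIV"
  define u where "u x = w x / S" for x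
  have u: "full_support_dist u"
    unfolding u_def S_def by (rule full_support_dist_normalize[OF w_pos \<open>w summable_on UNIV\<close>])
  have "K x1 z / u x1 = K x2 z / u x2" if "x1 \<in> X" "x2 \<in> X" for x1 x2 z
  proof -
    from pairwise that obtain c where "c > 0" and row: "\<And>z. K x1 z = c * K x2 z"
      unfolding proportional_def by blast
    from that have "K x1 z / u x1 = S * (K x1 z / K x1 z0)" "K x2 z / u x2 = S * (K x2 z / K x2 z0)"
      by (simp_all add: u_def w_def)
    moreover have "K x1 z / K x1 z0 = K x2 z / K x2 z0"
      using \<open>c > 0\<close> by (simp add: row)
    ultimately show ?thesis by simp
  qed
  with u show ?thesis by blast
qed

lemma exists_dist_equal_ratios_iff_proportional:
  fixes K :: "'x::countable \<Rightarrow> 'z \<Rightarrow> real"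
  assumes "\<And>x z. 0 \<le> K x z" and "\<And>z. (\<lambda>x. K x z) summable_on UNIV"
  shows "(\<exists>u. full_support_dist u \<and> (\<forall>x1\<in>X. \<forall>x2\<in>X. \<forall>z. K x1 z / u x1 = K x2 z / u x2))
    \<longleftrightarrow> (\<forall>x1\<in>X. \<forall>x2\<in>X. proportional (K x1) (K x2))"
proof (intro iffI ballI)
  fix x1 x2 assume "x1 \<in> X" "x2 \<in> X"
    and "\<exists>u. full_support_dist u \<and> (\<forall>x1\<in>X. \<forall>x2\<in>X. \<forall>z. K x1 z / u x1 = K x2 z / u x2)"
  then show "proportional (K x1) (K x2)"
    using proportional_if_equal_ratios by metis
qed (rule exists_dist_equal_ratios_if_proportional[OF assms])

lemma obsT_nonneg: "block_mdp H levS Tl q \<Longrightarrow> 0 \<le> obsT Tl q x' x a"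
  by (simp add: block_mdp_def obsT_def)

lemma Tl_le_Max: "Tl s a s' \<le> Max (range (\<lambda>(s, a, s'). Tl s a s'))"
  for Tl :: "'s::finite \<Rightarrow> 'a::finite \<Rightarrow> 's \<Rightarrow> real"
  by (rule Max_ge) (auto intro!: image_eqI[where x = "(s, a, s')"])

lemma emission_le_1: "block_mdp H levS Tl q \<Longrightarrow> q s x \<le> 1"
  using finite_sum_le_has_sum[where f = "q s" and S = 1 and A = UNIV and B = "{x}"]
  by (simp add: block_mdp_def)

lemma obsT_le_Max:
  assumes "block_mdp H levS Tl q"
  shows "obsT Tl q x' x a \<le> Max (range (\<lambda>(s, a, s'). Tl s a s'))"
proof -
  have "q (decoder q x') x' * Tl (decoder q x) a (decoder q x')
      \<le> 1 * Max (range (\<lambda>(s, a, s'). Tl s a s'))"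
    by (rule mult_mono[OF emission_le_1[OF assms] Tl_le_Max]) (use assms in \<open>simp_all add: block_mdp_def\<close>)
  then show ?thesis by (simp add: obsT_def)
qed

lemma summable_on_sum:
  fixes f :: "'i \<Rightarrow> 'b \<Rightarrow> real"
  assumes "finite I" "\<And>i. i \<in> I \<Longrightarrow> f i summable_on A"
  shows "(\<lambda>x. \<Sum>i\<in>I. f i x) summable_on A"
  using assms by (induction I rule: finite_induct) (auto intro: summable_on_add)

lemma obsT_summable:
  assumes "block_mdp H levS Tl q"
  shows "(\<lambda>x'. obsT Tl q x' x a) summable_on UNIV"
proof (rule summable_on_comparison_test)
  let ?B = "Max (range (\<lambda>(s, a, s'). Tl s a s'))"
  have "q s summable_on UNIV" for s
    using assms by (auto simp: block_mdp_def summable_on_def)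
  then show "(\<lambda>x'. ?B * (\<Sum>s\<in>UNIV. q s x')) summable_on UNIV"
    by (intro summable_on_cmult_right summable_on_sum) auto
  show "0 \<le> obsT Tl q x' x a" for x'
    using assms by (rule obsT_nonneg)
  show "obsT Tl q x' x a \<le> ?B * (\<Sum>s\<in>UNIV. q s x')" for x'
  proof -
    have "obsT Tl q x' x a = q (decoder q x') x' * Tl (decoder q x) a (decoder q x')"
      by (simp add: obsT_def)
    also have "\<dots> \<le> (\<Sum>s\<in>UNIV. q s x') * ?B"
      using assms
      by (intro mult_mono member_le_sum Tl_le_Max) (auto simp: block_mdp_def intro!: sum_nonneg)
    finally show ?thesis
      by (simp add: mult.commute)
  qed
qed

lemma backward_KI_iff_proportional:
  assumes "block_mdp H levS Tl q"
  shows "backward_KI Tl q x1 x2 \<longleftrightarrow>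
    proportional (\<lambda>z. obsT Tl q x1 (fst z) (snd z)) (\<lambda>z. obsT Tl q x2 (fst z) (snd z))"
  unfolding backward_KI_def Pback_eq_posterior
proof (intro iffI allI impI)
  assume "\<forall>u. full_support_dist u \<longrightarrow>
    posterior (\<lambda>x' z. obsT Tl q x' (fst z) (snd z)) u x1 =
    posterior (\<lambda>x' z. obsT Tl q x' (fst z) (snd z)) u x2"
  then show "proportional (\<lambda>z. obsT Tl q x1 (fst z) (snd z)) (\<lambda>z. obsT Tl q x2 (fst z) (snd z))"
    using obsT_nonneg[OF assms] obsT_le_Max[OF assms]
    by (intro proportional_if_posterior_eq[where K = "\<lambda>x' z. obsT Tl q x' (fst z) (snd z)"]) auto
qed (rule posterior_eq_if_proportional)

theorem mainTheorem5:
  fixes H :: nat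
    and levS :: "'s::finite \<Rightarrow> nat"
    and Tl :: "'s \<Rightarrow> 'a::finite \<Rightarrow> 's \<Rightarrow> real"
    and q :: "'s \<Rightarrow> 'x::countable \<Rightarrow> real"
    and X' :: "'x set"
  assumes "block_mdp H levS Tl q"
  shows "(backward_KI_set Tl q X' \<longrightarrow>
            (\<exists>u :: 'x \<Rightarrow> real. full_support_dist u \<and>
               (\<forall>x'\<in>X'. \<forall>x''\<in>X'. \<forall>x a.
                  obsT Tl q x' x a / u x' = obsT Tl q x'' x a / u x'')))
       \<and> ((\<exists>u :: 'x \<Rightarrow> real. full_support_dist u \<and>
               (\<forall>x'\<in>X'. \<forall>x''\<in>X'. \<forall>x a.
                  obsT Tl q x' x a / u x' = obsT Tl q x'' x a / u x''))
            \<longrightarrow> backward_KI_set Tl q X')"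
proof -
  let ?K = "\<lambda>x' z. obsT Tl q x' (fst z) (snd z)"
  have "backward_KI_set Tl q X' \<longleftrightarrow> (\<forall>x1\<in>X'. \<forall>x2\<in>X'. proportional (?K x1) (?K x2))"
    by (simp add: backward_KI_set_def backward_KI_iff_proportional[OF assms])
  also have "\<dots> \<longleftrightarrow> (\<exists>u. full_support_dist u \<and> (\<forall>x1\<in>X'. \<forall>x2\<in>X'. \<forall>z. ?K x1 z / u x1 = ?K x2 z / u x2))"
    by (rule exists_dist_equal_ratios_iff_proportional[symmetric])
      (simp_all add: obsT_nonneg[OF assms] obsT_summable[OF assms])
  finally show ?thesis by auto
qed

end
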